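(* Let $d\ge2$, $E\subset[1,2]$ and $0\le\beta\le1$. If $M_E$ is bounded from $L^p_{rad}(\mathbb{R}^d)$ to $L^q(\mathbb{R}^d)$ for some $(1/p,1/q)\in[Q_1(\beta),Q_2(\beta)]$, then $\sup_{0<\delta<1}\delta^\beta N(E,\delta)<\infty$. If in addition $\beta=1$, then $\sup_{0<\delta<1}(\log(1/\delta))^{q/d}\,\delta N(E,\delta)<\infty$.
   Context: $M_Ef(x)=\sup_{t\in E}\left|\int_{\mathbb{S}^{d-1}}f(x-ty)\,d\sigma(y)\right|$ with $\sigma$ normalized surface measure on $\mathbb{S}^{d-1}$; $L^p_{rad}$ is the space of radial $L^p$ functions. $N(E,\delta)$ is the minimal number of intervals of length $\delta$ covering $E$. $Q_1(\beta)=(\frac{d-1}{d-1+\beta},\frac{d-1}{d-1+\beta})$, $Q_2(\beta)=(\frac{d(d-1)}{d^2-1+\beta},\frac{d-1}{d^2-1+\beta})$, and $[P,Q]$ is the closed segment between them. *)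

theory Defs
  imports "HOL-Analysis.Analysis"
begin

text \<open>Normalized surface measure on the unit sphere, realized as the push-forward of
  normalized Lebesgue measure on the unit ball under z \<mapsto> z/|z|.\<close>
definition sph_avg :: "('a::euclidean_space \<Rightarrow> real) \<Rightarrow> 'a \<Rightarrow> real \<Rightarrow> real" where
  "sph_avg f x t =
     (LINT z : ball 0 1 | lborel. f (x - t *\<^sub>R (z /\<^sub>R norm z))) / measure lborel (ball (0::'a) 1)"

definition sph_max :: "real set \<Rightarrow> ('a::euclidean_space \<Rightarrow> real) \<Rightarrow> 'a \<Rightarrow> ennreal" where
  "sph_max E f x = (SUP t\<in>E. ennreal \<bar>sph_avg f x t\<bar>)"

definition radial :: "('a::real_normed_vector \<Rightarrow> real) \<Rightarrow> bool" where
  "radial f \<longleftrightarrow> (\<forall>x y. norm x = norm y \<longrightarrow> f x = f y)"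

definition Lp_norm :: "real \<Rightarrow> ('a::euclidean_space \<Rightarrow> real) \<Rightarrow> real" where
  "Lp_norm p f = (LINT x | lborel. \<bar>f x\<bar> powr p) powr (1 / p)"

definition enn_powr :: "ennreal \<Rightarrow> real \<Rightarrow> ennreal" where
  "enn_powr x q = (if x = \<infinity> then \<infinity> else ennreal (enn2real x powr q))"

text \<open>Boundedness of M_E from L^p_rad to L^q, as an a priori inequality on the dense class of
  continuous compactly supported radial functions.\<close>
definition sph_max_bounded_rad :: "'a::euclidean_space itself \<Rightarrow> real set \<Rightarrow> real \<Rightarrow> real \<Rightarrow> bool" where
  "sph_max_bounded_rad _ E p q \<longleftrightarrow>
     (\<exists>C::real. \<forall>f::'a \<Rightarrow> real. radial f \<and> continuous_on UNIV f \<and> compact (closure {x. f x \<noteq> 0}) \<longrightarrow>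
        (\<integral>\<^sup>+ x. enn_powr (sph_max E f x) q \<partial>lborel) \<le> ennreal ((C * Lp_norm p f) powr q))"

definition cover_num :: "real set \<Rightarrow> real \<Rightarrow> nat" where
  "cover_num E \<delta> = (LEAST n. \<exists>A. finite A \<and> card A = n \<and> E \<subseteq> (\<Union>a\<in>A. {a..a+\<delta>}))"

definition Q1 :: "nat \<Rightarrow> real \<Rightarrow> real \<times> real" where
  "Q1 d \<beta> = ((real d - 1) / (real d - 1 + \<beta>), (real d - 1) / (real d - 1 + \<beta>))"

definition Q2 :: "nat \<Rightarrow> real \<Rightarrow> real \<times> real" where
  "Q2 d \<beta> = (real d * (real d - 1) / ((real d)^2 - 1 + \<beta>), (real d - 1) / ((real d)^2 - 1 + \<beta>))"

end

theory Submission
  imports Defs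
begin

text \<open>
  Test the maximal inequality on radial bumps f of radius \<delta>. For t \<in> E and
  ||x| - t| < \<delta>/4 the sphere of radius t about x meets the support of f in a cap of
  normalized measure \<greatersim> \<delta>^(d-1), so M_E f \<greatersim> \<delta>^(d-1) on the shells of width \<delta>/2 around
  the points of E. Around a \<delta>-separated subset of E with at least N(E,\<delta>)/2 points these
  shells are disjoint, of total volume \<greatersim> \<delta> N(E,\<delta>), while ||f||_p \<approx> \<delta>^(d/p). Hence
  \<delta>^((d-1)q+1) N(E,\<delta>) \<lesssim> \<delta>^(dq/p), and both Q1 and Q2 lie on the line d/p = d - 1 + (1-\<beta>)/q,
  which turns this into \<delta>^\<beta> N(E,\<delta>) \<lesssim> 1.

  At \<beta> = 1, i.e. p = d/(d-1), sum the bumps 2^(k(d-1)) f_(2^-k) over the K + 1 \<approx> log(1/\<delta>)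
  dyadic scales above \<delta>: their spherical averages add up to \<greatersim> K + 1, whereas the p-th power
  of the L^p norm is only \<lesssim> K + 1. This gains the factor (log 1/\<delta>)^(q - q/p) = (log 1/\<delta>)^(q/d).
\<close>

section \<open>Radial bumps\<close>

definition bump :: "real \<Rightarrow> 'a::real_normed_vector \<Rightarrow> real" where
  "bump r x = max 0 (min 1 (2 - norm x / r))"

lemma bump_nonneg: "0 \<le> bump r x"
  by (simp add: bump_def)

lemma bump_le_1: "bump r x \<le> 1"
  by (simp add: bump_def)

lemma bump_eq_1: "0 < r \<Longrightarrow> norm x \<le> r \<Longrightarrow> bump r x = 1"
  by (simp add: bump_def field_simps)

lemma bump_eq_0: "0 < r \<Longrightarrow> 2 * r \<le> norm x \<Longrightarrow> bump r x = 0"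
  by (simp add: bump_def field_simps)

lemma continuous_on_bump: "continuous_on S (bump r)"
  unfolding bump_def[abs_def] divide_inverse by (intro continuous_intros)

lemma borel_measurable_bump [measurable]: "bump r \<in> borel_measurable borel"
  by (rule borel_measurable_continuous_onI[OF continuous_on_bump])

definition radial_test :: "('a::euclidean_space \<Rightarrow> real) \<Rightarrow> bool" where
  "radial_test f \<longleftrightarrow> radial f \<and> continuous_on UNIV f \<and> compact (closure {x. f x \<noteq> 0})"

lemma sph_max_bounded_rad_iff:
  "sph_max_bounded_rad TYPE('a::euclidean_space) E p q \<longleftrightarrow>
     (\<exists>C. \<forall>f::'a \<Rightarrow> real. radial_test f \<longrightarrow>
        (\<integral>\<^sup>+ x. enn_powr (sph_max E f x) q \<partial>lborel) \<le> ennreal ((C * Lp_norm p f) powr q))"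
  by (simp add: sph_max_bounded_rad_def radial_test_def)

lemma radial_bump: "radial (bump r)"
  by (simp add: radial_def bump_def)

lemma radial_test_bump: "0 < r \<Longrightarrow> radial_test (bump r :: 'a::euclidean_space \<Rightarrow> real)"
proof -
  assume "0 < r"
  then have "{x::'a. bump r x \<noteq> 0} \<subseteq> ball 0 (2 * r)"
    using bump_eq_0[of r] by force
  then have "bounded {x::'a. bump r x \<noteq> 0}"
    by (rule bounded_subset[OF bounded_ball])
  then show ?thesis
    unfolding radial_test_def by (simp add: radial_bump continuous_on_bump)
qed

lemma radial_test_cmult: "radial_test f \<Longrightarrow> radial_test (\<lambda>x. c * f x)"
proof -
  assume f: "radial_test f"
  have "{x. c * f x \<noteq> 0} \<subseteq> {x. f x \<noteq> 0}" by auto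
  moreover have "bounded {x. f x \<noteq> 0}" using f by (simp add: radial_test_def)
  ultimately have "bounded {x. c * f x \<noteq> 0}" by (rule bounded_subset[rotated])
  moreover have "radial (\<lambda>x. c * f x)" using f unfolding radial_test_def radial_def by metis
  moreover have "continuous_on UNIV (\<lambda>x. c * f x)"
    using f by (simp add: radial_test_def continuous_on_mult_left)
  ultimately show ?thesis by (simp add: radial_test_def)
qed

lemma radial_test_sum:
  fixes f :: "'i \<Rightarrow> 'a::euclidean_space \<Rightarrow> real"
  assumes "finite F" and f: "\<And>k. k \<in> F \<Longrightarrow> radial_test (f k)"
  shows "radial_test (\<lambda>x. \<Sum>k\<in>F. f k x)"
proof -
  have "{x. (\<Sum>k\<in>F. f k x) \<noteq> 0} \<subseteq> (\<Union>k\<in>F. {x. f k x \<noteq> 0})"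
    by (auto elim: sum.not_neutral_contains_not_neutral)
  moreover have "bounded (\<Union>k\<in>F. {x. f k x \<noteq> 0})"
  proof (intro bounded_UN assms(1) ballI)
    fix k assume "k \<in> F"
    then show "bounded {x. f k x \<noteq> 0}" using f[of k] by (simp add: radial_test_def)
  qed
  ultimately have "bounded {x. (\<Sum>k\<in>F. f k x) \<noteq> 0}" by (rule bounded_subset[rotated])
  moreover have "radial (\<lambda>x. \<Sum>k\<in>F. f k x)"
    unfolding radial_def
  proof (intro allI impI sum.cong refl)
    fix x y :: 'a and k assume "norm x = norm y" "k \<in> F"
    then show "f k x = f k y" using f[of k] unfolding radial_test_def radial_def by metis
  qed
  moreover have "continuous_on UNIV (\<lambda>x. \<Sum>k\<in>F. f k x)"
    using f by (intro continuous_on_sum) (simp add: radial_test_def)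
  ultimately show ?thesis by (simp add: radial_test_def)
qed

section \<open>Spherical averages of bumps\<close>

lemma norm_normalize_diff_le:
  fixes z w :: "'a::real_normed_vector"
  assumes "norm w = 1" and "0 < s" and "norm (z - s *\<^sub>R w) < s"
  shows "norm (z /\<^sub>R norm z - w) \<le> 2 * norm (z - s *\<^sub>R w) / s"
proof -
  define y where "y = z /\<^sub>R s"
  have yw: "norm (y - w) = norm (z - s *\<^sub>R w) / s"
  proof -
    have "z - s *\<^sub>R w = s *\<^sub>R (y - w)" using assms(2) by (simp add: y_def algebra_simps)
    then show ?thesis using assms(2) by simp
  qed
  moreover have "norm (z - s *\<^sub>R w) / s < 1" using assms(2,3) by simp
  ultimately have "norm (y - w) < 1" by simp
  then have y0: "0 < norm y"
    using assms(1) norm_triangle_ineq2[of w y] by (auto simp: norm_minus_commute)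
  have "z /\<^sub>R norm z = y /\<^sub>R norm y" using assms(2) by (simp add: y_def)
  moreover have "norm (y /\<^sub>R norm y - y) = \<bar>1 - norm y\<bar>"
  proof -
    have "y /\<^sub>R norm y - y = (1 / norm y - 1) *\<^sub>R y" by (simp add: algebra_simps divide_inverse)
    then have "norm (y /\<^sub>R norm y - y) = \<bar>1 / norm y - 1\<bar> * norm y" by simp
    also have "\<dots> = \<bar>1 - norm y\<bar>" using y0 by (simp add: field_simps abs_mult[symmetric])
    finally show ?thesis .
  qed
  moreover have "\<bar>1 - norm y\<bar> \<le> norm (y - w)"
    using assms(1) norm_triangle_ineq3[of w y] by (simp add: norm_minus_commute)
  moreover have "norm (y /\<^sub>R norm y - w) \<le> norm (y /\<^sub>R norm y - y) + norm (y - w)"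
    by (rule norm_diff_triangle_le[OF order_refl order_refl])
  ultimately show ?thesis using yw by simp
qed

lemma measure_Union_separated_balls:
  fixes c :: "'i \<Rightarrow> 'a::euclidean_space"
  assumes "finite F" and "0 \<le> r"
    and sep: "\<And>k l. k \<in> F \<Longrightarrow> l \<in> F \<Longrightarrow> k \<noteq> l \<Longrightarrow> 2 * r \<le> dist (c k) (c l)"
  shows "measure lborel (\<Union>k\<in>F. ball (c k) r)
    = real (card F) * r ^ DIM('a) * measure lborel (ball (0::'a) 1)"
proof -
  have disj: "disjoint_family_on (\<lambda>k. ball (c k) r) F"
    unfolding disjoint_family_on_def
  proof (intro ballI impI)
    fix k l assume "k \<in> F" "l \<in> F" "k \<noteq> l"
    then have "2 * r \<le> dist (c k) (c l)" by (rule sep)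
    then show "ball (c k) r \<inter> ball (c l) r = {}"
      using dist_triangle_less_add[of "c k" _ r "c l" r] by (force simp: dist_commute)
  qed
  have "measure lborel (\<Union>k\<in>F. ball (c k) r) = (\<Sum>k\<in>F. measure lborel (ball (c k) r))"
  proof (rule measure_finite_Union[OF assms(1) _ disj])
    show "emeasure lborel (ball (c k) r) \<noteq> \<infinity>" for k
      using emeasure_lborel_ball_finite[of "c k" r] by simp
  qed auto
  also have "\<dots> = (\<Sum>k\<in>F. r ^ DIM('a) * measure lborel (ball (0::'a) 1))"
    using assms(2) by (intro sum.cong refl content_ball_conv_unit_ball)
  also have "\<dots> = real (card F) * r ^ DIM('a) * measure lborel (ball (0::'a) 1)"
    by simp
  finally show ?thesis .
qed


lemma ball_chain_along_direction:
  fixes w :: "'a::euclidean_space"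
  assumes w: "norm w = 1" and \<rho>: "0 < \<rho>" "\<rho> \<le> 1"
  obtains U where "U \<in> sets lborel" and "U \<subseteq> ball 0 1"
    and "3 / 64 ^ DIM('a) * \<rho> ^ (DIM('a) - 1) * measure lborel (ball (0::'a) 1) \<le> measure lborel U"
    and "\<And>z. z \<in> U \<Longrightarrow> \<exists>s\<ge>1/4. norm (z - s *\<^sub>R w) < \<rho> / 64"
proof -
  \<comment> \<open>About 3/\<rho> disjoint balls of radius \<rho>/64 centred on the segment from w/4 to w/2.\<close>
  define d where "d = DIM('a)"
  define n where "n = nat \<lceil>3 / \<rho>\<rceil>"
  define s where "s k = 1/4 + real k * \<rho> / 16" for k
  define U where "U = (\<Union>k\<in>{..<n}. ball (s k *\<^sub>R w) (\<rho> / 64))"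
  have n_eq: "real n = of_int \<lceil>3 / \<rho>\<rceil>" unfolding n_def using \<rho> by simp
  then have n: "3 / \<rho> \<le> real n" by linarith
  have n_gt: "real k < 3 / \<rho>" if "k < n" for k
  proof -
    have "real k + 1 \<le> real n" using that by linarith
    then show ?thesis using n_eq ceiling_correct[of "3 / \<rho>"] by linarith
  qed
  have meas: "measure lborel U = real n * (\<rho> / 64) ^ d * measure lborel (ball (0::'a) 1)"
    unfolding U_def d_def
  proof (subst measure_Union_separated_balls)
    fix k l assume "k \<in> {..<n}" "l \<in> {..<n}" "k \<noteq> l"
    then have "\<rho> / 16 \<le> \<bar>real k - real l\<bar> * (\<rho> / 16)" using \<rho> by simp
    also have "\<dots> = dist (s k *\<^sub>R w) (s l *\<^sub>R w)"
    proof -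
      have "s k *\<^sub>R w - s l *\<^sub>R w = ((real k - real l) * (\<rho> / 16)) *\<^sub>R w"
        by (simp add: s_def algebra_simps flip: scaleR_diff_left)
      then show ?thesis using w \<rho> by (simp add: dist_norm abs_mult)
    qed
    finally show "2 * (\<rho> / 64) \<le> dist (s k *\<^sub>R w) (s l *\<^sub>R w)" using \<rho> by linarith
  qed (use \<rho> in auto)
  have "\<rho> ^ d = \<rho> * \<rho> ^ (d - 1)"
    unfolding d_def using DIM_positive[where 'a='a] by (metis Suc_diff_1 power_Suc)
  then have "3 / 64 ^ d * \<rho> ^ (d - 1) = 3 / \<rho> * (\<rho> / 64) ^ d"
    using \<rho> by (simp add: field_simps power_divide)
  also have "\<dots> \<le> real n * (\<rho> / 64) ^ d"
    using n \<rho> by (intro mult_right_mono) auto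
  finally have U_meas:
      "3 / 64 ^ d * \<rho> ^ (d - 1) * measure lborel (ball (0::'a) 1) \<le> measure lborel U"
    unfolding meas by (intro mult_right_mono) auto
  have U_sub: "U \<subseteq> ball 0 1"
  proof
    fix z assume "z \<in> U"
    then obtain k where k: "k < n" "dist (s k *\<^sub>R w) z < \<rho> / 64" unfolding U_def by auto
    have "norm z \<le> s k + dist (s k *\<^sub>R w) z"
      using w \<rho> norm_triangle_sub[of z "s k *\<^sub>R w"]
      by (simp add: s_def dist_norm norm_minus_commute)
    moreover have "s k < 1/2" using n_gt[OF k(1)] \<rho> by (simp add: s_def field_simps)
    ultimately show "z \<in> ball 0 1" using k \<rho> by simp
  qed
  have "\<exists>s\<ge>1/4. norm (z - s *\<^sub>R w) < \<rho> / 64" if "z \<in> U" for z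
    using that \<rho> unfolding U_def s_def by (force simp: dist_norm norm_minus_commute)
  then show ?thesis using that[of U] U_sub U_meas unfolding U_def d_def by auto
qed

lemma norm_diff_scaleR_le:
  fixes x u :: "'a::real_normed_vector"
  assumes "x \<noteq> 0" and "0 \<le> t"
  shows "norm (x - t *\<^sub>R u) \<le> \<bar>norm x - t\<bar> + t * norm (u - x /\<^sub>R norm x)"
proof -
  define v where "v = x /\<^sub>R norm x"
  have "norm x *\<^sub>R v = x" using assms(1) by (simp add: v_def)
  then have "x - t *\<^sub>R v = (norm x - t) *\<^sub>R v" by (simp add: scaleR_diff_left)
  moreover have "norm v = 1" using assms(1) by (simp add: v_def)
  ultimately have "norm (x - t *\<^sub>R v) = \<bar>norm x - t\<bar>" by simp
  moreover have "norm (t *\<^sub>R v - t *\<^sub>R u) = t * norm (u - v)"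
    using assms(2) by (simp flip: scaleR_diff_right add: norm_minus_commute)
  moreover have "norm (x - t *\<^sub>R u) \<le> norm (x - t *\<^sub>R v) + norm (t *\<^sub>R v - t *\<^sub>R u)"
    by (rule norm_diff_triangle_le[OF order_refl order_refl])
  ultimately show ?thesis by (simp add: v_def)
qed

lemma unit_ball_directions_near_point:
  fixes x :: "'a::euclidean_space"
  assumes t: "1 \<le> t" "t \<le> 2" and \<rho>: "0 < \<rho>" "\<rho> \<le> 1" and x: "\<bar>norm x - t\<bar> \<le> \<rho> / 4"
  obtains U where "U \<in> sets lborel" and "U \<subseteq> ball 0 1"
    and "3 / 64 ^ DIM('a) * \<rho> ^ (DIM('a) - 1) * measure lborel (ball (0::'a) 1) \<le> measure lborel U"
    and "\<And>z. z \<in> U \<Longrightarrow> norm (x - t *\<^sub>R (z /\<^sub>R norm z)) < \<rho>"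
proof -
  have "x \<noteq> 0" using x t \<rho> by auto
  then have w: "norm (x /\<^sub>R norm x) = 1" by simp
  obtain U where U: "U \<in> sets lborel" "U \<subseteq> ball 0 1"
    "3 / 64 ^ DIM('a) * \<rho> ^ (DIM('a) - 1) * measure lborel (ball (0::'a) 1) \<le> measure lborel U"
    and near: "\<And>z. z \<in> U \<Longrightarrow> \<exists>s\<ge>1/4. norm (z - s *\<^sub>R (x /\<^sub>R norm x)) < \<rho> / 64"
    using ball_chain_along_direction[OF w \<rho>] by blast
  have "norm (x - t *\<^sub>R (z /\<^sub>R norm z)) < \<rho>" if z: "z \<in> U" for z
  proof -
    obtain s where s: "1/4 \<le> s" "norm (z - s *\<^sub>R (x /\<^sub>R norm x)) < \<rho> / 64"
      using near[OF z] by blast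
    have "norm (z /\<^sub>R norm z - x /\<^sub>R norm x) \<le> 2 * norm (z - s *\<^sub>R (x /\<^sub>R norm x)) / s"
      using s \<rho> by (intro norm_normalize_diff_le w) auto
    also have "\<dots> \<le> 2 * (\<rho> / 64) / (1/4)"
      using s \<rho> by (intro divide_mono mult_left_mono) auto
    finally have "t * norm (z /\<^sub>R norm z - x /\<^sub>R norm x) \<le> 2 * (\<rho> / 8)"
      using t by (intro mult_mono) auto
    then show ?thesis
      using norm_diff_scaleR_le[OF \<open>x \<noteq> 0\<close>, of t "z /\<^sub>R norm z"] x t \<rho> by linarith
  qed
  then show ?thesis using that U by blast
qed

lemma set_integrable_sph_avg:
  fixes g :: "'a::euclidean_space \<Rightarrow> real"
  assumes "g \<in> borel_measurable borel" and "\<And>y. \<bar>g y\<bar> \<le> B"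
  shows "set_integrable lborel (ball 0 1) (\<lambda>z. g (x - t *\<^sub>R (z /\<^sub>R norm z)))"
  unfolding set_integrable_def
proof (rule integrableI_bounded_set_indicator[where B=B])
  show "(\<lambda>z. g (x - t *\<^sub>R (z /\<^sub>R norm z))) \<in> borel_measurable lborel"
    using assms(1) by measurable
qed (use assms(2) emeasure_lborel_ball_finite in auto)

lemma sph_avg_sum:
  fixes g :: "'i \<Rightarrow> 'a::euclidean_space \<Rightarrow> real"
  assumes "finite F" and "\<And>k. k \<in> F \<Longrightarrow> g k \<in> borel_measurable borel"
    and "\<And>k y. k \<in> F \<Longrightarrow> \<bar>g k y\<bar> \<le> B k"
  shows "sph_avg (\<lambda>y. \<Sum>k\<in>F. a k * g k y) x t = (\<Sum>k\<in>F. a k * sph_avg (g k) x t)"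
proof -
  have int: "set_integrable lborel (ball 0 1) (\<lambda>z. a k * g k (x - t *\<^sub>R (z /\<^sub>R norm z)))"
    if "k \<in> F" for k
    using that assms(2,3) by (intro set_integrable_mult_right set_integrable_sph_avg) auto
  have "(LINT z:ball 0 1|lborel. \<Sum>k\<in>F. a k * g k (x - t *\<^sub>R (z /\<^sub>R norm z)))
      = (\<Sum>k\<in>F. LINT z:ball 0 1|lborel. a k * g k (x - t *\<^sub>R (z /\<^sub>R norm z)))"
    unfolding set_lebesgue_integral_def scaleR_sum_right
    by (rule Bochner_Integration.integral_sum) (use int in \<open>simp add: set_integrable_def\<close>)
  then show ?thesis
    unfolding sph_avg_def by (simp add: sum_divide_distrib)
qed

lemma sph_avg_bump_ge:
  fixes x :: "'a::euclidean_space"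
  assumes "1 \<le> t" "t \<le> 2" "0 < \<rho>" "\<rho> \<le> 1" "\<bar>norm x - t\<bar> \<le> \<rho> / 4"
  shows "3 / 64 ^ DIM('a) * \<rho> ^ (DIM('a) - 1) \<le> sph_avg (bump \<rho>) x t"
proof -
  define V where "V = measure lborel (ball (0::'a) 1)"
  have V: "0 < V" unfolding V_def by (rule content_ball_pos) simp
  obtain U where U: "U \<in> sets lborel" "U \<subseteq> ball 0 1"
    "3 / 64 ^ DIM('a) * \<rho> ^ (DIM('a) - 1) * V \<le> measure lborel U"
    "\<And>z. z \<in> U \<Longrightarrow> norm (x - t *\<^sub>R (z /\<^sub>R norm z)) < \<rho>"
    using unit_ball_directions_near_point[OF assms] unfolding V_def by blast
  have U_fin: "emeasure lborel U < \<infinity>"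
    by (rule order_le_less_trans[OF emeasure_mono[OF U(2)] emeasure_lborel_ball_finite]) simp
  have "measure lborel U = (LINT z:ball 0 1|lborel. indicator U z)"
  proof -
    have "(\<lambda>z. indicator (ball 0 1) z *\<^sub>R indicator U z) = (indicator U :: 'a \<Rightarrow> real)"
      using U(2) by (auto simp: indicator_def fun_eq_iff)
    then show ?thesis by (simp add: set_lebesgue_integral_def)
  qed
  also have "\<dots> \<le> (LINT z:ball 0 1|lborel. bump \<rho> (x - t *\<^sub>R (z /\<^sub>R norm z)))"
  proof (rule set_integral_mono)
    show "set_integrable lborel (ball 0 1) (indicator U :: 'a \<Rightarrow> real)"
      unfolding set_integrable_def
      by (intro integrable_mult_indicator integrable_real_indicator U(1) U_fin) simp
    show "set_integrable lborel (ball 0 1) (\<lambda>z. bump \<rho> (x - t *\<^sub>R (z /\<^sub>R norm z)))"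
      by (rule set_integrable_sph_avg[where B=1]) (auto simp: bump_nonneg bump_le_1 abs_le_iff)
    show "indicator U z \<le> bump \<rho> (x - t *\<^sub>R (z /\<^sub>R norm z))" for z
    proof (cases "z \<in> U")
      case True
      then show ?thesis using U(4)[OF True] assms(3) by (simp add: bump_eq_1)
    qed (simp add: bump_nonneg)
  qed
  finally have "3 / 64 ^ DIM('a) * \<rho> ^ (DIM('a) - 1) * V
      \<le> (LINT z:ball 0 1|lborel. bump \<rho> (x - t *\<^sub>R (z /\<^sub>R norm z)))"
    using U(3) by linarith
  then show ?thesis
    unfolding sph_avg_def V_def[symmetric] by (subst pos_le_divide_eq[OF V])
qed

section \<open>L^p norms of the test functions\<close>

lemma borel_measurable_radial_test: "radial_test f \<Longrightarrow> f \<in> borel_measurable borel"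
  unfolding radial_test_def by (blast intro: borel_measurable_continuous_onI)

lemma Lp_norm_nonneg: "0 \<le> Lp_norm p f"
  by (simp add: Lp_norm_def)

lemma Lp_norm_le:
  fixes f G :: "'a::euclidean_space \<Rightarrow> real"
  assumes f: "f \<in> borel_measurable borel" and p: "0 < p" and G: "integrable lborel G"
    and fG: "\<And>x. \<bar>f x\<bar> powr p \<le> G x"
  shows "Lp_norm p f \<le> (LINT x|lborel. G x) powr (1 / p)"
proof -
  have "integrable lborel (\<lambda>x. \<bar>f x\<bar> powr p)"
  proof (rule Bochner_Integration.integrable_bound[OF G])
    show "(\<lambda>x. \<bar>f x\<bar> powr p) \<in> borel_measurable lborel" using f by measurable
    show "AE x in lborel. norm (\<bar>f x\<bar> powr p) \<le> norm (G x)"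
      using fG by (intro AE_I2) (smt (verit) powr_ge_zero real_norm_def)
  qed
  then have "(LINT x|lborel. \<bar>f x\<bar> powr p) \<le> (LINT x|lborel. G x)"
    using G fG by (rule integral_mono)
  moreover have "0 \<le> (LINT x|lborel. \<bar>f x\<bar> powr p)" by (intro integral_nonneg_AE) auto
  ultimately show ?thesis unfolding Lp_norm_def using p by (intro powr_mono2) auto
qed

lemma Lp_norm_bump_le:
  assumes r: "0 < r" and p: "0 < p"
  shows "Lp_norm p (bump r :: 'a::euclidean_space \<Rightarrow> real)
    \<le> ((2 * r) ^ DIM('a) * measure lborel (ball (0::'a) 1)) powr (1 / p)"
proof -
  have "Lp_norm p (bump r :: 'a \<Rightarrow> real)
      \<le> (LINT x|lborel. indicator (ball (0::'a) (2 * r)) x) powr (1 / p)"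
  proof (rule Lp_norm_le[OF borel_measurable_bump p])
    show "integrable lborel (\<lambda>x. indicator (ball (0::'a) (2 * r)) x :: real)"
      by (intro integrable_real_indicator emeasure_lborel_ball_finite) simp
    show "\<bar>bump r x\<bar> powr p \<le> indicator (ball (0::'a) (2 * r)) x" for x :: 'a
    proof (cases "norm x < 2 * r")
      case True
      then show ?thesis using p by (simp add: powr_le1 abs_of_nonneg bump_nonneg bump_le_1)
    next
      case False
      then show ?thesis using r by (simp add: bump_eq_0)
    qed
  qed
  also have "(LINT x|lborel. indicator (ball (0::'a) (2 * r)) x)
      = measure lborel (ball (0::'a) (2 * r))"
    by simp
  also have "\<dots> = (2 * r) ^ DIM('a) * measure lborel (ball (0::'a) 1)"
    using r by (intro content_ball_conv_unit_ball) simp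
  finally show ?thesis .
qed

definition dyadic_bumps :: "nat \<Rightarrow> 'a::euclidean_space \<Rightarrow> real" where
  "dyadic_bumps K x = (\<Sum>k\<le>K. 2 ^ ((DIM('a) - 1) * k) * bump ((1/2) ^ k) x)"

lemma radial_test_dyadic_bumps: "radial_test (dyadic_bumps K)"
  unfolding dyadic_bumps_def by (intro radial_test_sum radial_test_cmult radial_test_bump) auto

lemma two_power_mult_half_power: "(2::real) ^ n * (1/2) ^ n = 1"
  by (simp add: power_one_over)

lemma sph_avg_dyadic_bumps_ge:
  fixes x :: "'a::euclidean_space"
  assumes t: "1 \<le> t" "t \<le> 2" and x: "\<bar>norm x - t\<bar> \<le> (1/2) ^ K / 4"
  shows "(real K + 1) * (3 / 64 ^ DIM('a)) \<le> sph_avg (dyadic_bumps K) x t"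
proof -
  define d where "d = DIM('a)"
  have "(real K + 1) * (3 / 64 ^ d)
      = (\<Sum>k\<le>K. 2 ^ ((d - 1) * k) * (3 / 64 ^ d * ((1/2) ^ k) ^ (d - 1)))"
  proof -
    have "(2::real) ^ ((d - 1) * k) * ((1/2) ^ k) ^ (d - 1) = 1" for k
      using two_power_mult_half_power[of "(d - 1) * k"]
      by (simp add: power_mult[symmetric] mult.commute)
    then show ?thesis by (simp add: mult.left_commute)
  qed
  also have "\<dots> \<le> (\<Sum>k\<le>K. 2 ^ ((d - 1) * k) * sph_avg (bump ((1/2) ^ k)) x t)"
  proof (intro sum_mono mult_left_mono)
    fix k assume "k \<in> {..K}"
    then have "((1::real)/2) ^ K \<le> (1/2) ^ k" by (intro power_decreasing) auto
    with x have "\<bar>norm x - t\<bar> \<le> (1/2) ^ k / 4" by linarith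
    then show "3 / 64 ^ d * ((1/2) ^ k) ^ (d - 1) \<le> sph_avg (bump ((1/2) ^ k)) x t"
      unfolding d_def using t by (intro sph_avg_bump_ge) (auto simp: power_le_one)
  qed simp
  also have "\<dots> = sph_avg (dyadic_bumps K) x t"
    unfolding dyadic_bumps_def d_def
    by (rule sph_avg_sum[where B="\<lambda>_. 1", symmetric]) (auto simp: bump_nonneg bump_le_1)
  finally show ?thesis unfolding d_def .
qed

lemma sum_power_le_twice_last: "2 \<le> (r::real) \<Longrightarrow> (\<Sum>k\<le>n. r ^ k) \<le> 2 * r ^ n"
proof (induction n)
  case (Suc n)
  have "(\<Sum>k\<le>Suc n. r ^ k) \<le> 2 * r ^ n + r ^ Suc n" using Suc by simp
  also have "2 * r ^ n \<le> r * r ^ n" using Suc.prems by (intro mult_right_mono) auto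
  finally show ?case by simp
qed simp

lemma dyadic_bumps_le_top_scale:
  fixes x :: "'a::euclidean_space"
  assumes d: "2 \<le> DIM('a)" and j: "j \<le> K"
    and top: "\<And>k. k \<le> K \<Longrightarrow> norm x < 2 * (1/2) ^ k \<Longrightarrow> k \<le> j"
  shows "dyadic_bumps K x \<le> 2 * 2 ^ ((DIM('a) - 1) * j)"
proof -
  define d where "d = DIM('a)"
  have "dyadic_bumps K x \<le> (\<Sum>k\<le>K. if k \<le> j then (2 ^ (d - 1)) ^ k else 0)"
    unfolding dyadic_bumps_def d_def[symmetric]
  proof (intro sum_mono)
    fix k assume k: "k \<in> {..K}"
    show "2 ^ ((d - 1) * k) * bump ((1/2) ^ k) x \<le> (if k \<le> j then (2 ^ (d - 1)) ^ k else 0)"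
    proof (cases "k \<le> j")
      case False
      then have "2 * (1/2) ^ k \<le> norm x" using top[of k] k by fastforce
      then show ?thesis using False by (simp add: bump_eq_0)
    qed (simp add: power_mult bump_le_1)
  qed
  also have "\<dots> = (\<Sum>k\<in>{k\<in>{..K}. k \<le> j}. (2 ^ (d - 1)) ^ k)"
    by (rule sum.inter_filter[symmetric]) simp
  also have "{k\<in>{..K}. k \<le> j} = {..j}" using j by auto
  also have "(\<Sum>k\<le>j. (2 ^ (d - 1)) ^ k) \<le> 2 * ((2::real) ^ (d - 1)) ^ j"
  proof (rule sum_power_le_twice_last)
    show "(2::real) \<le> 2 ^ (d - 1)"
      using d power_increasing[of 1 "d - 1" "2::real"] unfolding d_def by simp
  qed
  finally show ?thesis by (simp add: d_def power_mult)
qed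

lemma dyadic_bumps_powr_le:
  fixes x :: "'a::euclidean_space"
  assumes d: "2 \<le> DIM('a)" and p: "0 < p" and dp: "(real DIM('a) - 1) * p = real DIM('a)"
  shows "\<bar>dyadic_bumps K x\<bar> powr p
    \<le> 2 powr p * (\<Sum>j\<le>K. 2 ^ (DIM('a) * j) * indicator (ball (0::'a) (2 * (1/2) ^ j)) x)"
    (is "_ \<le> ?G")
proof -
  define d where "d = DIM('a)"
  define J where "J = {k. k \<le> K \<and> norm x < 2 * (1/2) ^ k}"
  have f0: "0 \<le> dyadic_bumps K x"
    unfolding dyadic_bumps_def by (intro sum_nonneg mult_nonneg_nonneg bump_nonneg) auto
  show ?thesis
  proof (cases "J = {}")
    case True
    then have "dyadic_bumps K x = 0"
      unfolding dyadic_bumps_def J_def by (auto intro!: sum.neutral simp: bump_eq_0 not_less)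
    then show ?thesis using p by (simp add: sum_nonneg)
  next
    case False
    \<comment> \<open>At p = d/(d-1) the p-th power of the top weight 2^((d-1)j) is 2^(dj),
      the reciprocal volume of the j-th ball up to a constant.\<close>
    define j where "j = Max J"
    have "finite J" unfolding J_def by simp
    then have j: "j \<le> K" "norm x < 2 * (1/2) ^ j" "\<And>k. k \<le> K \<Longrightarrow> norm x < 2 * (1/2) ^ k \<Longrightarrow> k \<le> j"
      using False Max_in[of J] Max_ge[of J] unfolding j_def J_def by auto
    have "dyadic_bumps K x \<le> 2 * 2 ^ ((d - 1) * j)"
      unfolding d_def by (rule dyadic_bumps_le_top_scale[OF d j(1,3)])
    also have "(2::real) ^ ((d - 1) * j) = 2 powr ((real d - 1) * j)"
      using d by (subst powr_realpow[symmetric]) (simp_all add: d_def of_nat_diff)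
    finally have "\<bar>dyadic_bumps K x\<bar> powr p \<le> (2 * 2 powr ((real d - 1) * j)) powr p"
      using f0 p by (intro powr_mono2) auto
    also have "\<dots> = 2 powr p * 2 powr (((real d - 1) * p) * j)"
      by (simp add: powr_mult powr_powr mult_ac)
    also have "\<dots> = 2 powr p * 2 ^ (d * j)"
      using dp by (simp add: d_def powr_realpow[symmetric])
    also have "\<dots> \<le> ?G"
    proof -
      have "(2::real) ^ (d * j)
          \<le> (\<Sum>i\<le>K. 2 ^ (d * i) * indicator (ball (0::'a) (2 * (1/2) ^ i)) x)"
        using j(1,2) member_le_sum[where i=j and A="{..K}" and
            f="\<lambda>i. (2::real) ^ (d * i) * indicator (ball (0::'a) (2 * (1/2) ^ i)) x"] by simp
      then show ?thesis unfolding d_def by simp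
    qed
    finally show ?thesis .
  qed
qed

lemma Lp_norm_dyadic_bumps_le:
  assumes d: "2 \<le> DIM('a)" and p: "0 < p" and dp: "(real DIM('a) - 1) * p = real DIM('a)"
  shows "Lp_norm p (dyadic_bumps K :: 'a::euclidean_space \<Rightarrow> real)
    \<le> (2 powr p * 2 ^ DIM('a) * measure lborel (ball (0::'a) 1) * (real K + 1)) powr (1 / p)"
proof -
  define G where
    "G x = 2 powr p * (\<Sum>j\<le>K. 2 ^ (DIM('a) * j) * indicator (ball (0::'a) (2 * (1/2) ^ j)) x)"
    for x :: 'a
  have ball: "integrable lborel (indicator (ball (0::'a) r) :: 'a \<Rightarrow> real)" for r
    by (intro integrable_real_indicator emeasure_lborel_ball_finite) simp
  have "(2::real) ^ (DIM('a) * j) * measure lborel (ball (0::'a) (2 * (1/2) ^ j))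
      = 2 ^ DIM('a) * measure lborel (ball (0::'a) 1)" for j
  proof -
    have "measure lborel (ball (0::'a) (2 * (1/2) ^ j))
        = (2 * (1/2) ^ j) ^ DIM('a) * measure lborel (ball (0::'a) 1)"
      by (intro content_ball_conv_unit_ball) simp
    moreover have "(2::real) ^ (DIM('a) * j) * (2 * (1/2) ^ j) ^ DIM('a) = 2 ^ DIM('a)"
      using two_power_mult_half_power[of "DIM('a) * j"]
      by (simp add: power_mult_distrib power_mult[symmetric] mult.commute mult.left_commute)
    ultimately show ?thesis by (simp add: mult.assoc[symmetric])
  qed
  moreover have "(LINT x|lborel. G x)
      = 2 powr p * (\<Sum>j\<le>K. 2 ^ (DIM('a) * j) * measure lborel (ball (0::'a) (2 * (1/2) ^ j)))"
    unfolding G_def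
    by (subst integral_mult_right_zero, subst Bochner_Integration.integral_sum) (auto intro: ball)
  ultimately have "(LINT x|lborel. G x)
      = 2 powr p * 2 ^ DIM('a) * measure lborel (ball (0::'a) 1) * (real K + 1)"
    by simp
  moreover have "Lp_norm p (dyadic_bumps K :: 'a \<Rightarrow> real) \<le> (LINT x|lborel. G x) powr (1 / p)"
  proof (rule Lp_norm_le[OF borel_measurable_radial_test[OF radial_test_dyadic_bumps] p])
    show "integrable lborel G" unfolding G_def
      by (intro Bochner_Integration.integrable_mult_right Bochner_Integration.integrable_sum ball)
    show "\<bar>dyadic_bumps K x\<bar> powr p \<le> G x" for x
      unfolding G_def by (rule dyadic_bumps_powr_le[OF d p dp])
  qed
  ultimately show ?thesis by simp
qed

section \<open>Separated subsets and disjoint shells\<close>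

lemma cover_num_le_card:
  assumes "finite A" and "E \<subseteq> (\<Union>a\<in>A. {a..a + \<delta>})"
  shows "cover_num E \<delta> \<le> card A"
  unfolding cover_num_def by (rule Least_le) (use assms in blast)

lemma cover_num_le_card_grid:
  fixes E :: "real set"
  assumes E: "E \<subseteq> {a..b}" and \<delta>: "0 < \<delta>"
  shows "cover_num E \<delta> \<le> card {j. j \<le> nat \<lceil>(b - a) / \<delta>\<rceil> \<and> E \<inter> {a + j * \<delta>..a + j * \<delta> + \<delta>} \<noteq> {}}"
    (is "_ \<le> card ?J")
proof -
  have "E \<subseteq> (\<Union>j\<in>?J. {a + j * \<delta>..a + j * \<delta> + \<delta>})"
  proof
    fix e assume e: "e \<in> E"
    define j where "j = nat \<lfloor>(e - a) / \<delta>\<rfloor>"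
    have "0 \<le> (e - a) / \<delta>" using e E \<delta> by auto
    then have j: "real j \<le> (e - a) / \<delta>" "(e - a) / \<delta> < real j + 1"
      unfolding j_def by linarith+
    then have "e \<in> {a + j * \<delta>..a + j * \<delta> + \<delta>}" using \<delta> by (simp add: field_simps)
    moreover have "j \<le> nat \<lceil>(b - a) / \<delta>\<rceil>"
    proof -
      have "(e - a) / \<delta> \<le> (b - a) / \<delta>" using e E \<delta> by (intro divide_right_mono) auto
      then show ?thesis using j(1) by linarith
    qed
    ultimately show "e \<in> (\<Union>j\<in>?J. {a + j * \<delta>..a + j * \<delta> + \<delta>})" using e by blast
  qed
  then have "cover_num E \<delta> \<le> card ((\<lambda>j. a + j * \<delta>) ` ?J)"
    by (intro cover_num_le_card) auto
  also have "\<dots> \<le> card ?J" by (intro card_image_le) simp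
  finally show ?thesis .
qed

lemma card_le_twice_card_parity_class:
  fixes J :: "nat set"
  assumes "finite J"
  obtains b where "card J \<le> 2 * card {j\<in>J. even j = b}"
proof -
  have "card J = card {j\<in>J. even j = True} + card {j\<in>J. even j = False}"
    using assms by (subst card_Un_disjoint[symmetric]) (auto intro: arg_cong[where f=card])
  then show ?thesis using that[of True] that[of False] by linarith
qed

lemma exists_separated_subset_cover_num:
  fixes E :: "real set"
  assumes E: "E \<subseteq> {a..b}" and \<delta>: "0 < \<delta>"
  obtains T where "finite T" and "T \<subseteq> E"
    and "\<And>s t. s \<in> T \<Longrightarrow> t \<in> T \<Longrightarrow> s \<noteq> t \<Longrightarrow> \<delta> \<le> \<bar>s - t\<bar>"
    and "cover_num E \<delta> \<le> 2 * card T"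
proof -
  \<comment> \<open>Pick one point of E in every other grid interval that meets E.\<close>
  define I where "I j = {a + real j * \<delta>..a + real j * \<delta> + \<delta>}" for j :: nat
  define J where "J = {j. j \<le> nat \<lceil>(b - a) / \<delta>\<rceil> \<and> E \<inter> I j \<noteq> {}}"
  have "finite J" unfolding J_def by simp
  then obtain par where par: "card J \<le> 2 * card {j\<in>J. even j = par}"
    by (rule card_le_twice_card_parity_class)
  define J' where "J' = {j\<in>J. even j = par}"
  have "\<forall>j\<in>J. \<exists>e. e \<in> E \<inter> I j" unfolding J_def by blast
  then obtain pt where pt: "\<And>j. j \<in> J \<Longrightarrow> pt j \<in> E \<inter> I j" by (metis bchoice)
  have sep: "\<delta> \<le> \<bar>pt j - pt l\<bar>" if "j \<in> J'" "l \<in> J'" "j < l" for j l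
  proof -
    have "even j = even l" using that unfolding J'_def by auto
    with \<open>j < l\<close> have "j + 2 \<le> l" by presburger
    then have "real j + 2 \<le> real l" by linarith
    then have "(real j + 2) * \<delta> \<le> real l * \<delta>" using \<delta> by (intro mult_right_mono) auto
    moreover have "pt j \<le> a + real j * \<delta> + \<delta>" "a + real l * \<delta> \<le> pt l"
      using pt that unfolding J'_def I_def by fastforce+
    ultimately show ?thesis by (simp add: algebra_simps)
  qed
  have sep': "\<delta> \<le> \<bar>pt j - pt l\<bar>" if "j \<in> J'" "l \<in> J'" "j \<noteq> l" for j l
    using sep[of j l] sep[of l j] that by (cases "j < l") (auto simp: abs_minus_commute)
  then have "inj_on pt J'" using \<delta> by (intro inj_onI) (metis abs_zero diff_self not_less)
  show ?thesis
  proof (rule that)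
    show "finite (pt ` J')" using \<open>finite J\<close> unfolding J'_def by simp
    show "pt ` J' \<subseteq> E" using pt unfolding J'_def by auto
    show "\<delta> \<le> \<bar>s - t\<bar>" if "s \<in> pt ` J'" "t \<in> pt ` J'" "s \<noteq> t" for s t
      using that sep' by blast
    have "cover_num E \<delta> \<le> card J"
      using cover_num_le_card_grid[OF E \<delta>] unfolding J_def I_def .
    then show "cover_num E \<delta> \<le> 2 * card (pt ` J')"
      using par card_image[OF \<open>inj_on pt J'\<close>] unfolding J'_def by linarith
  qed
qed

lemma diff_le_power_diff:
  fixes a b :: real
  assumes "0 \<le> a" "a \<le> b" "1 \<le> b" "1 \<le> n"
  shows "b - a \<le> b ^ n - a ^ n"
proof -
  obtain m where n: "n = Suc m" using assms(4) by (cases n) auto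
  have "a * a ^ m \<le> a * b ^ m" using assms by (intro mult_left_mono power_mono) auto
  moreover have "(b - a) * 1 \<le> (b - a) * b ^ m"
    using assms by (intro mult_left_mono one_le_power) auto
  ultimately show ?thesis unfolding n by (simp add: left_diff_distrib)
qed

lemma measure_shell_ge:
  assumes "1 \<le> t" "0 < \<epsilon>" "\<epsilon> \<le> t"
  shows "2 * \<epsilon> * measure lborel (ball (0::'a::euclidean_space) 1)
    \<le> measure lborel {x::'a. \<bar>norm x - t\<bar> < \<epsilon>}"
proof -
  define V where "V = measure lborel (ball (0::'a) 1)"
  have V: "0 \<le> V" unfolding V_def by simp
  have shell: "{x::'a. \<bar>norm x - t\<bar> < \<epsilon>} = ball 0 (t + \<epsilon>) - cball 0 (t - \<epsilon>)"
    by (auto simp: abs_less_iff)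
  have "measure lborel (ball (0::'a) (t + \<epsilon>) - cball 0 (t - \<epsilon>))
      = measure lborel (ball (0::'a) (t + \<epsilon>)) - measure lborel (cball (0::'a) (t - \<epsilon>))"
    using assms emeasure_lborel_ball_finite[of "0::'a" "t + \<epsilon>"] by (intro measure_Diff) auto
  also have "\<dots> = ((t + \<epsilon>) ^ DIM('a) - (t - \<epsilon>) ^ DIM('a)) * V"
    using assms unfolding V_def content_cball_conv_ball
    by (simp add: content_ball_conv_unit_ball[of "t + \<epsilon>"] content_ball_conv_unit_ball[of "t - \<epsilon>"]
        left_diff_distrib)
  also have "\<dots> \<ge> 2 * \<epsilon> * V"
    using assms V by (intro mult_right_mono) (auto intro: order_trans[OF _ diff_le_power_diff])
  finally show ?thesis unfolding shell V_def .
qed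

section \<open>From the maximal inequality to covering numbers\<close>

lemma enn_powr_ge:
  assumes "ennreal m \<le> X" "0 \<le> m" "0 < q"
  shows "ennreal (m powr q) \<le> enn_powr X q"
proof (cases "X = \<infinity>")
  case False
  then have "m \<le> enn2real X"
    using assms(1,2) enn2real_mono[OF assms(1)] by (simp add: less_top)
  then have "m powr q \<le> enn2real X powr q" using assms by (intro powr_mono2) auto
  then show ?thesis using False by (simp add: enn_powr_def)
qed (simp add: enn_powr_def)

lemma enn_powr_sph_max_ge:
  assumes "t \<in> E" and "m \<le> sph_avg f x t" and "0 \<le> m" and "0 < q"
  shows "ennreal (m powr q) \<le> enn_powr (sph_max E f x) q"
proof (rule enn_powr_ge)
  have "ennreal m \<le> ennreal \<bar>sph_avg f x t\<bar>" using assms(2) by (intro ennreal_leI) simp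
  also have "\<dots> \<le> sph_max E f x" unfolding sph_max_def using assms(1) by (rule SUP_upper)
  finally show "ennreal m \<le> sph_max E f x" .
qed (use assms in auto)

lemma emeasure_Union_separated_shells_ge:
  fixes T :: "real set"
  assumes T: "finite T" "T \<subseteq> {1..}" and \<delta>: "0 < \<delta>" "\<delta> \<le> 4"
    and sep: "\<And>s t. s \<in> T \<Longrightarrow> t \<in> T \<Longrightarrow> s \<noteq> t \<Longrightarrow> \<delta> \<le> \<bar>s - t\<bar>"
  shows "ennreal (real (card T) * (\<delta> / 2 * measure lborel (ball (0::'a::euclidean_space) 1)))
    \<le> emeasure lborel (\<Union>t\<in>T. {x::'a. \<bar>norm x - t\<bar> < \<delta> / 4})"
proof -
  define V where "V = measure lborel (ball (0::'a) 1)"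
  define S where "S t = {x::'a. \<bar>norm x - t\<bar> < \<delta> / 4}" for t
  have S_sets: "S t \<in> sets lborel" for t unfolding S_def by measurable
  have "disjoint_family_on S T"
    unfolding disjoint_family_on_def S_def
  proof (intro ballI impI)
    fix s t assume "s \<in> T" "t \<in> T" "s \<noteq> t"
    then have "\<delta> \<le> \<bar>s - t\<bar>" by (rule sep)
    then have "\<not> (\<bar>r - s\<bar> < \<delta> / 4 \<and> \<bar>r - t\<bar> < \<delta> / 4)" for r by arith
    then show "{x::'a. \<bar>norm x - s\<bar> < \<delta> / 4} \<inter> {x. \<bar>norm x - t\<bar> < \<delta> / 4} = {}"
      by blast
  qed
  then have "emeasure lborel (\<Union>t\<in>T. S t) = (\<Sum>t\<in>T. emeasure lborel (S t))"
    using T(1) S_sets by (intro sum_emeasure[symmetric]) auto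
  also have "\<dots> \<ge> (\<Sum>t\<in>T. ennreal (\<delta> / 2 * V))"
  proof (intro sum_mono)
    fix t assume "t \<in> T"
    then have "\<delta> / 2 * V \<le> measure lborel (S t)"
      using T(2) \<delta> measure_shell_ge[of t "\<delta> / 4"] unfolding S_def V_def by auto
    moreover have "ennreal (measure lborel (S t)) \<le> emeasure lborel (S t)"
      by (simp add: measure_def ennreal_enn2real_if)
    ultimately show "ennreal (\<delta> / 2 * V) \<le> emeasure lborel (S t)"
      by (meson ennreal_leI order_trans)
  qed
  finally have "of_nat (card T) * ennreal (\<delta> / 2 * V) \<le> emeasure lborel (\<Union>t\<in>T. S t)"
    by simp
  moreover have "ennreal (real (card T) * (\<delta> / 2 * V)) = of_nat (card T) * ennreal (\<delta> / 2 * V)"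
    using \<delta> by (subst ennreal_mult) (auto simp: V_def ennreal_of_nat_eq_real_of_nat)
  ultimately show ?thesis unfolding S_def V_def by simp
qed

lemma nn_integral_sph_max_ge:
  fixes f :: "'a::euclidean_space \<Rightarrow> real"
  assumes E: "E \<subseteq> {1..2}" and \<delta>: "0 < \<delta>" "\<delta> < 1" and q: "0 < q" and m: "0 \<le> m"
    and avg: "\<And>t x. t \<in> E \<Longrightarrow> \<bar>norm x - t\<bar> < \<delta> / 4 \<Longrightarrow> m \<le> sph_avg f x t"
  shows "ennreal (m powr q * real (cover_num E \<delta>) * (\<delta> / 4 * measure lborel (ball (0::'a) 1)))
    \<le> (\<integral>\<^sup>+ x. enn_powr (sph_max E f x) q \<partial>lborel)"
proof -
  \<comment> \<open>M_E f \<ge> m on the disjoint shells of width \<delta>/2 around a \<delta>-separated T \<subseteq> E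
    with N(E,\<delta>) \<le> 2|T|.\<close>
  define V where "V = measure lborel (ball (0::'a) 1)"
  obtain T where T: "finite T" "T \<subseteq> E" "\<And>s t. s \<in> T \<Longrightarrow> t \<in> T \<Longrightarrow> s \<noteq> t \<Longrightarrow> \<delta> \<le> \<bar>s - t\<bar>"
    "cover_num E \<delta> \<le> 2 * card T"
    using exists_separated_subset_cover_num[OF E \<delta>(1)] by blast
  define U where "U = (\<Union>t\<in>T. {x::'a. \<bar>norm x - t\<bar> < \<delta> / 4})"
  have "m powr q * real (cover_num E \<delta>) * (\<delta> / 4 * V) \<le> m powr q * (real (card T) * (\<delta> / 2 * V))"
  proof -
    have "real (cover_num E \<delta>) * (\<delta> / 4 * V) \<le> 2 * real (card T) * (\<delta> / 4 * V)"
      using of_nat_mono[OF T(4)] \<delta> by (intro mult_right_mono) (auto simp: V_def)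
    then have "m powr q * (real (cover_num E \<delta>) * (\<delta> / 4 * V))
        \<le> m powr q * (2 * real (card T) * (\<delta> / 4 * V))"
      by (rule mult_left_mono) simp
    then show ?thesis by (simp add: mult_ac)
  qed
  then have "ennreal (m powr q * real (cover_num E \<delta>) * (\<delta> / 4 * V))
      \<le> ennreal (m powr q) * ennreal (real (card T) * (\<delta> / 2 * V))"
    using \<delta> by (subst ennreal_mult[symmetric]) (auto simp: V_def intro: ennreal_leI)
  also have "\<dots> \<le> ennreal (m powr q) * emeasure lborel U"
    using T(1,2,3) E \<delta> unfolding U_def V_def
    by (intro mult_left_mono emeasure_Union_separated_shells_ge) auto
  also have "\<dots> = (\<integral>\<^sup>+ x. ennreal (m powr q) * indicator U x \<partial>lborel)"
    using T(1) unfolding U_def by (intro nn_integral_cmult_indicator[symmetric]) auto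
  also have "\<dots> \<le> (\<integral>\<^sup>+ x. enn_powr (sph_max E f x) q \<partial>lborel)"
  proof (intro nn_integral_mono)
    fix x
    show "ennreal (m powr q) * indicator U x \<le> enn_powr (sph_max E f x) q"
    proof (cases "x \<in> U")
      case True
      then obtain t where "t \<in> E" "\<bar>norm x - t\<bar> < \<delta> / 4" using T(2) unfolding U_def by auto
      then show ?thesis using True avg m q by (simp add: enn_powr_sph_max_ge)
    qed simp
  qed
  finally show ?thesis unfolding V_def .
qed

text \<open>The real logarithm satisfies ln x = ln |x|, so powr ignores the sign of its base.\<close>

lemma powr_eq_abs_powr: "(x::real) powr a = \<bar>x\<bar> powr a"
  by (simp add: powr_def ln_real_def)

lemma sph_max_bounded_rad_imp_cover_num_le:
  fixes E :: "real set"
  assumes bounded: "sph_max_bounded_rad TYPE('a::euclidean_space) E p q"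
    and E: "E \<subseteq> {1..2}" and q: "0 < q"
  obtains C where "0 \<le> C"
    and "\<And>f \<delta> m. radial_test f \<Longrightarrow> 0 < \<delta> \<Longrightarrow> \<delta> < 1 \<Longrightarrow> 0 \<le> m \<Longrightarrow>
      (\<And>t x. t \<in> E \<Longrightarrow> \<bar>norm x - t\<bar> < \<delta> / 4 \<Longrightarrow> m \<le> sph_avg f (x::'a) t) \<Longrightarrow>
      m powr q * real (cover_num E \<delta>) * (\<delta> / 4 * measure lborel (ball (0::'a) 1))
        \<le> (C * Lp_norm p f) powr q"
proof -
  obtain C where C: "\<And>f::'a \<Rightarrow> real. radial_test f \<Longrightarrow>
      (\<integral>\<^sup>+ x. enn_powr (sph_max E f x) q \<partial>lborel) \<le> ennreal ((C * Lp_norm p f) powr q)"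
    using bounded unfolding sph_max_bounded_rad_iff by blast
  show ?thesis
  proof (rule that[of "\<bar>C\<bar>"])
    fix f :: "'a \<Rightarrow> real" and \<delta> m
    assume f: "radial_test f" and \<delta>: "0 < \<delta>" "\<delta> < 1" and m: "0 \<le> m"
      and avg: "\<And>t x. t \<in> E \<Longrightarrow> \<bar>norm x - t\<bar> < \<delta> / 4 \<Longrightarrow> m \<le> sph_avg f x t"
    have "ennreal (m powr q * real (cover_num E \<delta>) * (\<delta> / 4 * measure lborel (ball (0::'a) 1)))
        \<le> ennreal ((C * Lp_norm p f) powr q)"
      using nn_integral_sph_max_ge[OF E \<delta> q m avg] C[OF f] by (rule order_trans)
    then have "m powr q * real (cover_num E \<delta>) * (\<delta> / 4 * measure lborel (ball (0::'a) 1))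
        \<le> (C * Lp_norm p f) powr q"
      by (simp add: ennreal_le_iff)
    also have "(C * Lp_norm p f) powr q = (\<bar>C\<bar> * Lp_norm p f) powr q"
      by (subst powr_eq_abs_powr) (simp add: abs_mult Lp_norm_nonneg)
    finally show "m powr q * real (cover_num E \<delta>) * (\<delta> / 4 * measure lborel (ball (0::'a) 1))
        \<le> (\<bar>C\<bar> * Lp_norm p f) powr q" .
  qed simp
qed

lemma closed_segment_Q1_Q2_scaling:
  assumes d: "2 \<le> d" and \<beta>: "0 \<le> \<beta>"
    and seg: "(1 / p, 1 / q) \<in> closed_segment (Q1 d \<beta>) (Q2 d \<beta>)"
  shows "real d / p = real d - 1 + (1 - \<beta>) / q"
proof -
  define L where "L z = real d * fst z - (real d - 1) - (1 - \<beta>) * snd z" for z :: "real \<times> real"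
  have "0 < real d - 1 + \<beta>" using d \<beta> by simp
  then have L1: "L (Q1 d \<beta>) = 0" by (simp add: L_def Q1_def field_simps)
  have "4 \<le> (real d)\<^sup>2" using d power_mono[of 2 "real d" 2] by simp
  then have L2: "L (Q2 d \<beta>) = 0" using \<beta> by (simp add: L_def Q2_def field_simps power2_eq_square)
  obtain u where "(1 / p, 1 / q) = (1 - u) *\<^sub>R Q1 d \<beta> + u *\<^sub>R Q2 d \<beta>"
    using seg unfolding closed_segment_def by auto
  moreover have "L ((1 - u) *\<^sub>R P + u *\<^sub>R Q) = (1 - u) * L P + u * L Q" for P Q
    by (simp add: L_def algebra_simps)
  ultimately have "L (1 / p, 1 / q) = 0" using L1 L2 by simp
  then show ?thesis by (simp add: L_def field_simps)
qed

lemma mult_powr_le_imp_powr_le_divide: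
  fixes s :: real
  assumes "0 < B" and "0 < s" and "B * s powr e * N \<le> A * s powr (e - \<beta>)"
  shows "s powr \<beta> * N \<le> A / B"
proof -
  have "(B * (s powr \<beta> * N)) * s powr (e - \<beta>) \<le> A * s powr (e - \<beta>)"
    using assms(3) by (simp add: powr_add[symmetric] mult_ac)
  then have "B * (s powr \<beta> * N) \<le> A" using assms(2) by simp
  then show ?thesis using assms(1) by (simp add: field_simps)
qed

lemma exists_dyadic_scale:
  fixes \<delta> :: real
  assumes "0 < \<delta>" "\<delta> < 1"
  obtains K :: nat where "\<delta> \<le> (1/2) ^ K" and "ln (1 / \<delta>) \<le> real K + 1"
proof -
  define K where "K = nat \<lfloor>log 2 (1 / \<delta>)\<rfloor>"
  have "0 < log 2 (1 / \<delta>)" using assms by simp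
  then have K: "real K \<le> log 2 (1 / \<delta>)" "log 2 (1 / \<delta>) < real K + 1"
    unfolding K_def by linarith+
  have "(2::real) ^ K \<le> 1 / \<delta>"
    using K(1) assms by (simp add: le_log_iff powr_realpow[symmetric])
  then have "\<delta> \<le> (1/2) ^ K" using assms by (simp add: field_simps power_one_over)
  moreover have "ln (1 / \<delta>) \<le> real K + 1"
  proof -
    have "ln (1 / \<delta>) = log 2 (1 / \<delta>) * ln 2" by (simp add: log_def)
    also have "\<dots> \<le> (real K + 1) * 1"
      using K \<open>0 < log 2 (1 / \<delta>)\<close> ln_2_less_1 by (intro mult_mono) auto
    finally show ?thesis by simp
  qed
  ultimately show ?thesis by (rule that)
qed

lemma cover_num_bound_of_sph_max_bounded:
  fixes E :: "real set"
  assumes bounded: "sph_max_bounded_rad TYPE('a::euclidean_space) E p q"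
    and E: "E \<subseteq> {1..2}" and p: "0 < p" and q: "0 < q"
    and scaling: "real DIM('a) / p = real DIM('a) - 1 + (1 - \<beta>) / q"
  shows "\<exists>C. \<forall>\<delta>\<in>{0<..<1}. \<delta> powr \<beta> * real (cover_num E \<delta>) \<le> C"
proof -
  define d where "d = DIM('a)"
  define V where "V = measure lborel (ball (0::'a) 1)"
  have V: "0 < V" unfolding V_def by (rule content_ball_pos) simp
  obtain C where C: "0 \<le> C" and bound: "\<And>f \<delta> m. radial_test f \<Longrightarrow> 0 < \<delta> \<Longrightarrow> \<delta> < 1 \<Longrightarrow> 0 \<le> m \<Longrightarrow>
      (\<And>t x. t \<in> E \<Longrightarrow> \<bar>norm x - t\<bar> < \<delta> / 4 \<Longrightarrow> m \<le> sph_avg f (x::'a) t) \<Longrightarrow>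
      m powr q * real (cover_num E \<delta>) * (\<delta> / 4 * V) \<le> (C * Lp_norm p f) powr q"
    using sph_max_bounded_rad_imp_cover_num_le[OF bounded E q] unfolding V_def by blast
  define A where "A = (C * (2 ^ d * V) powr (1 / p)) powr q"
  define B where "B = (3 / 64 ^ d) powr q * (V / 4)"
  have "\<delta> powr \<beta> * real (cover_num E \<delta>) \<le> A / B" if \<delta>: "0 < \<delta>" "\<delta> < 1" for \<delta>
  proof (rule mult_powr_le_imp_powr_le_divide)
    show "0 < B" unfolding B_def using V by simp
    define m where "m = 3 / 64 ^ d * \<delta> ^ (d - 1)"
    have "\<delta> ^ (d - 1) = \<delta> powr (real d - 1)"
      using \<delta> DIM_positive[where 'a='a] by (simp add: d_def powr_realpow[symmetric] of_nat_diff)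
    then have "m powr q = (3 / 64 ^ d) powr q * (\<delta> powr (real d - 1)) powr q"
      unfolding m_def using \<delta> by (subst powr_mult) auto
    then have "m powr q = (3 / 64 ^ d) powr q * \<delta> powr ((real d - 1) * q)"
      by (simp add: powr_powr)
    then have "B * \<delta> powr ((real d - 1) * q + 1) * real (cover_num E \<delta>)
        = m powr q * real (cover_num E \<delta>) * (\<delta> / 4 * V)"
      using \<delta> by (simp add: B_def powr_add mult_ac)
    also have "\<dots> \<le> (C * Lp_norm p (bump \<delta> :: 'a \<Rightarrow> real)) powr q"
    proof (rule bound[OF radial_test_bump[OF \<delta>(1)] \<delta>])
      show "0 \<le> m" unfolding m_def using \<delta> by simp
      show "m \<le> sph_avg (bump \<delta>) x t" if "t \<in> E" "\<bar>norm x - t\<bar> < \<delta> / 4" for t and x :: 'a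
        unfolding m_def d_def using that E \<delta> by (intro sph_avg_bump_ge) auto
    qed
    also have "\<dots> \<le> (C * ((2 * \<delta>) ^ d * V) powr (1 / p)) powr q"
      using Lp_norm_bump_le[OF \<delta>(1) p, where 'a='a] C q
      unfolding d_def V_def
      by (intro powr_mono2 mult_left_mono mult_nonneg_nonneg Lp_norm_nonneg) auto
    also have "\<dots> = A * \<delta> powr (real d * q / p)"
      using \<delta> V
      by (simp add: A_def power_mult_distrib powr_mult powr_powr powr_realpow[symmetric] mult_ac)
    also have "real d * q / p = (real d - 1) * q + 1 - \<beta>"
      using scaling q unfolding d_def by (simp add: field_simps)
    finally show "B * \<delta> powr ((real d - 1) * q + 1) * real (cover_num E \<delta>)
        \<le> A * \<delta> powr ((real d - 1) * q + 1 - \<beta>)" .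
  qed (use \<delta> in simp)
  then show ?thesis by (intro exI[of _ "A / B"]) auto
qed

lemma cover_num_log_bound_of_sph_max_bounded:
  fixes E :: "real set"
  assumes bounded: "sph_max_bounded_rad TYPE('a::euclidean_space) E p q"
    and E: "E \<subseteq> {1..2}" and d2: "2 \<le> DIM('a)" and p: "0 < p" and q: "0 < q"
    and endpoint: "real DIM('a) / p = real DIM('a) - 1"
  shows "\<exists>C. \<forall>\<delta>\<in>{0<..<1}. ln (1 / \<delta>) powr (q / real DIM('a)) * \<delta> * real (cover_num E \<delta>) \<le> C"
proof -
  define d where "d = DIM('a)"
  define V where "V = measure lborel (ball (0::'a) 1)"
  have V: "0 < V" unfolding V_def by (rule content_ball_pos) simp
  obtain C where C: "0 \<le> C" and bound: "\<And>f \<delta> m. radial_test f \<Longrightarrow> 0 < \<delta> \<Longrightarrow> \<delta> < 1 \<Longrightarrow> 0 \<le> m \<Longrightarrow>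
      (\<And>t x. t \<in> E \<Longrightarrow> \<bar>norm x - t\<bar> < \<delta> / 4 \<Longrightarrow> m \<le> sph_avg f (x::'a) t) \<Longrightarrow>
      m powr q * real (cover_num E \<delta>) * (\<delta> / 4 * V) \<le> (C * Lp_norm p f) powr q"
    using sph_max_bounded_rad_imp_cover_num_le[OF bounded E q] unfolding V_def by blast
  have dp: "(real DIM('a) - 1) * p = real DIM('a)" using endpoint p by (simp add: field_simps)
  define A where "A = (C * (2 powr p * 2 ^ d * V) powr (1 / p)) powr q"
  define B where "B = (3 / 64 ^ d) powr q * (V / 4)"
  have "ln (1 / \<delta>) powr (q / real d) * \<delta> * real (cover_num E \<delta>) \<le> A / B" if \<delta>: "0 < \<delta>" "\<delta> < 1" for \<delta>
  proof -
    obtain K where K: "\<delta> \<le> (1/2) ^ K" "ln (1 / \<delta>) \<le> real K + 1"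
      using exists_dyadic_scale[OF \<delta>] by blast
    define m where "m = (real K + 1) * (3 / 64 ^ d)"
    have "(real K + 1) powr (q / real d) * (\<delta> * real (cover_num E \<delta>)) \<le> A / B"
    proof (rule mult_powr_le_imp_powr_le_divide)
      show "0 < B" unfolding B_def using V by simp
      have "B * (real K + 1) powr q * (\<delta> * real (cover_num E \<delta>))
          = m powr q * real (cover_num E \<delta>) * (\<delta> / 4 * V)"
        unfolding m_def B_def by (subst powr_mult) (auto simp: mult_ac)
      also have "\<dots> \<le> (C * Lp_norm p (dyadic_bumps K :: 'a \<Rightarrow> real)) powr q"
      proof (rule bound[OF radial_test_dyadic_bumps \<delta>])
        show "0 \<le> m" unfolding m_def by simp
        show "m \<le> sph_avg (dyadic_bumps K) x t" if "t \<in> E" "\<bar>norm x - t\<bar> < \<delta> / 4" for t and x :: 'a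
          unfolding m_def d_def using that E K(1) by (intro sph_avg_dyadic_bumps_ge) auto
      qed
      also have "\<dots> \<le> (C * (2 powr p * 2 ^ d * V * (real K + 1)) powr (1 / p)) powr q"
        using Lp_norm_dyadic_bumps_le[OF d2 p dp, of K] C q
        unfolding d_def V_def
        by (intro powr_mono2 mult_left_mono mult_nonneg_nonneg Lp_norm_nonneg) auto
      also have "\<dots> = A * (real K + 1) powr (q / p)"
        using V by (simp add: A_def powr_mult powr_powr mult_ac)
      also have "q / p = q - q / real d"
      proof -
        have "q / p = q * (real d / p) / real d" using d2 unfolding d_def by simp
        then show ?thesis using endpoint d2 unfolding d_def by (simp add: field_simps)
      qed
      finally show "B * (real K + 1) powr q * (\<delta> * real (cover_num E \<delta>))
          \<le> A * (real K + 1) powr (q - q / real d)" .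
    qed simp
    moreover have "ln (1 / \<delta>) powr (q / real d) \<le> (real K + 1) powr (q / real d)"
      using K(2) \<delta> q by (intro powr_mono2) auto
    ultimately show ?thesis
      using \<delta> by (smt (verit) mult.assoc mult_right_mono of_nat_0_le_iff zero_le_mult_iff)
  qed
  then show ?thesis unfolding d_def by (intro exI[of _ "A / B"]) auto
qed

theorem proposition4p1:
  fixes E :: "real set" and \<beta> p q :: real
  assumes "DIM('a::euclidean_space) \<ge> 2"
    and "E \<subseteq> {1..2}"
    and "0 \<le> \<beta>" and "\<beta> \<le> 1"
    and "p > 0" and "q > 0"
    and "(1 / p, 1 / q) \<in> closed_segment (Q1 DIM('a) \<beta>) (Q2 DIM('a) \<beta>)"
    and "sph_max_bounded_rad TYPE('a) E p q"
  shows "(\<exists>C. \<forall>\<delta>\<in>{0<..<1}. \<delta> powr \<beta> * real (cover_num E \<delta>) \<le> C) \<and>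
         (\<beta> = 1 \<longrightarrow> (\<exists>C. \<forall>\<delta>\<in>{0<..<1}.
           (ln (1 / \<delta>)) powr (q / real DIM('a)) * \<delta> * real (cover_num E \<delta>) \<le> C))"
proof -
  have scaling: "real DIM('a) / p = real DIM('a) - 1 + (1 - \<beta>) / q"
    using closed_segment_Q1_Q2_scaling[OF assms(1,3,7)] .
  show ?thesis
    using cover_num_bound_of_sph_max_bounded[OF assms(8,2,5,6) scaling]
      cover_num_log_bound_of_sph_max_bounded[OF assms(8,2,1,5,6)] scaling by auto
qed

end
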